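(* For every integer $n\ge1$, $$F_{2n-2}=\sum_{(a_1,\dots,a_k)\in C(n)}(2^{a_1-1}-1)(2^{a_2-1}-1)\cdots(2^{a_k-1}-1).$$
   Context: $C(n)$ is the set of all compositions $(a_1,\dots,a_k)$ of $n$ (sequences of positive integers with sum $n$, any number of parts). Fibonacci numbers: $F_0=0$, $F_1=1$, $F_n=F_{n-1}+F_{n-2}$. *)

theory Defs
  imports Main "HOL-Number_Theory.Fib"
begin

definition compositions :: "nat \<Rightarrow> nat list set" where
  "compositions n = {as. (\<forall>a\<in>set as. 0 < a) \<and> sum_list as = n}"

end

theory Submission
  imports Defs
begin

text \<open>Splitting off the first part of a composition gives, for
  \<open>S n = \<Sum>\<^bsub>as \<in> C(n)\<^esub> \<Prod> w(a\<^sub>i)\<close> with any weight \<open>w\<close>, the convolution recurrence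
  \<open>S (m+1) = \<Sum>\<^bsub>k\<le>m\<^esub> w(k+1) S(m-k)\<close>. For \<open>w(a) = 2^(a-1) - 1\<close> we have \<open>w(1) = 0\<close> and
  \<open>w(a+1) = 2 w(a) + 1\<close>, so \<open>S(m+2) = 2 S(m+1) + \<Sum>\<^bsub>k\<le>m\<^esub> S(k)\<close>; subtracting two
  consecutive instances yields \<open>S(m+3) = 3 S(m+2) - S(m+1)\<close>, which is the recurrence
  of the even-indexed Fibonacci numbers.\<close>

lemma finite_compositions: "finite (compositions n)"
proof (rule finite_subset)
  show "compositions n \<subseteq> {xs. set xs \<subseteq> {..n} \<and> length xs \<le> n}"
  proof
    fix xs assume "xs \<in> compositions n"
    hence pos: "\<forall>a\<in>set xs. 0 < a" and sum: "sum_list xs = n"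
      by (auto simp: compositions_def)
    have "length xs \<le> sum_list xs" using pos by (induction xs) auto
    thus "xs \<in> {xs. set xs \<subseteq> {..n} \<and> length xs \<le> n}"
      using sum member_le_sum_list by fastforce
  qed
  show "finite {xs. set xs \<subseteq> {..n} \<and> length xs \<le> n}"
    by (rule finite_lists_length_le) simp
qed

lemma compositions_0: "compositions 0 = {[]}"
  by (auto simp: compositions_def) (metis list.set_intros(1) neq_Nil_conv not_gr0)

lemma compositions_Suc:
  "compositions (Suc m) = (\<Union>k<Suc m. (#) (Suc k) ` compositions (m - k))"
proof
  show "compositions (Suc m) \<subseteq> (\<Union>k<Suc m. (#) (Suc k) ` compositions (m - k))"
  proof
    fix xs assume xs_comp: "xs \<in> compositions (Suc m)"
    then obtain b ys where xs: "xs = b # ys"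
      by (cases xs) (auto simp: compositions_def)
    with xs_comp have "0 < b" "b \<le> Suc m" "ys \<in> compositions (m - (b - 1))"
      by (auto simp: compositions_def)
    thus "xs \<in> (\<Union>k<Suc m. (#) (Suc k) ` compositions (m - k))"
      using xs by (intro UN_I[of "b - 1"]) auto
  qed
  show "(\<Union>k<Suc m. (#) (Suc k) ` compositions (m - k)) \<subseteq> compositions (Suc m)"
    by (auto simp: compositions_def)
qed

definition composition_weight_sum :: "(nat \<Rightarrow> 'a::comm_semiring_1) \<Rightarrow> nat \<Rightarrow> 'a" where
  "composition_weight_sum w n = (\<Sum>as\<in>compositions n. prod_list (map w as))"

lemma composition_weight_sum_0: "composition_weight_sum w 0 = 1"
  by (simp add: composition_weight_sum_def compositions_0)

lemma composition_weight_sum_Suc: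
  "composition_weight_sum w (Suc m) =
     (\<Sum>k<Suc m. w (Suc k) * composition_weight_sum w (m - k))"
proof -
  have "composition_weight_sum w (Suc m) =
      (\<Sum>k<Suc m. \<Sum>as\<in>(#) (Suc k) ` compositions (m - k). prod_list (map w as))"
    unfolding composition_weight_sum_def compositions_Suc
    by (rule sum.UNION_disjoint) (auto simp: finite_compositions)
  also have "\<dots> = (\<Sum>k<Suc m. \<Sum>as\<in>compositions (m - k). w (Suc k) * prod_list (map w as))"
    by (subst sum.reindex) (auto simp: inj_on_def)
  finally show ?thesis
    by (simp add: composition_weight_sum_def sum_distrib_left)
qed

definition pow2_composition_sum :: "nat \<Rightarrow> int" where
  "pow2_composition_sum = composition_weight_sum (\<lambda>a. 2 ^ (a - 1) - 1)"

lemma pow2_composition_sum_Suc_Suc: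
  "pow2_composition_sum (Suc (Suc m)) = 2 * pow2_composition_sum (Suc m) + (\<Sum>k<Suc m. pow2_composition_sum k)"
proof -
  have "pow2_composition_sum (Suc (Suc m)) = (\<Sum>k<Suc m. (2 ^ Suc k - 1) * pow2_composition_sum (m - k))"
    unfolding pow2_composition_sum_def
    by (simp only: composition_weight_sum_Suc sum.lessThan_Suc_shift) simp
  also have "\<dots> = 2 * (\<Sum>k<Suc m. (2 ^ k - 1) * pow2_composition_sum (m - k))
                    + (\<Sum>k<Suc m. pow2_composition_sum (m - k))"
    by (simp add: sum_distrib_left algebra_simps flip: sum.distrib)
  also have "(\<Sum>k<Suc m. pow2_composition_sum (m - k)) = (\<Sum>k<Suc m. pow2_composition_sum k)"
    using sum.nat_diff_reindex[of pow2_composition_sum "Suc m"] by simp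
  finally show ?thesis
    by (simp add: pow2_composition_sum_def composition_weight_sum_Suc)
qed

lemma pow2_composition_sum_recurrence:
  "pow2_composition_sum (Suc (Suc (Suc m))) = 3 * pow2_composition_sum (Suc (Suc m)) - pow2_composition_sum (Suc m)"
  using pow2_composition_sum_Suc_Suc[of "Suc m"] pow2_composition_sum_Suc_Suc[of m] by simp

lemma fib_even_recurrence: "fib (2 * m + 4) + fib (2 * m) = 3 * fib (2 * m + 2)"
  by (simp add: numeral_eq_Suc)

lemma pow2_composition_sum_Suc_eq_fib: "pow2_composition_sum (Suc m) = int (fib (2 * m))"
proof (induction m rule: fib.induct)
  case 1
  show ?case
    by (simp add: pow2_composition_sum_def composition_weight_sum_Suc composition_weight_sum_0)
next
  case 2
  show ?case
    using pow2_composition_sum_Suc_Suc[of 0]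
    by (simp add: pow2_composition_sum_def composition_weight_sum_Suc composition_weight_sum_0
        numeral_2_eq_2)
next
  case (3 m)
  have "int (fib (2 * m + 4)) = 3 * int (fib (2 * m + 2)) - int (fib (2 * m))"
    using arg_cong[OF fib_even_recurrence[of m], of int] by simp
  with pow2_composition_sum_recurrence[of m] 3 show ?case
    by (simp add: numeral_eq_Suc)
qed

theorem mainTheorem12:
  fixes n :: nat
  assumes "n \<ge> 1"
  shows "int (fib (2 * n - 2)) =
    (\<Sum>as\<in>compositions n. \<Prod>i<length as. (2::int) ^ (as ! i - 1) - 1)"
proof -
  obtain m where n: "n = Suc m" using assms by (cases n) auto
  have "(\<Sum>as\<in>compositions n. \<Prod>i<length as. (2::int) ^ (as ! i - 1) - 1) = pow2_composition_sum n"
    by (simp add: pow2_composition_sum_def composition_weight_sum_def prod.list_conv_set_nth lessThan_atLeast0)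
  with pow2_composition_sum_Suc_eq_fib[of m] n show ?thesis by simp
qed

end
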